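(* Let $\mathcal{H}_A$ and $\mathcal{H}_B$ be finite-dimensional complex Hilbert spaces, let $T_A\in B(\mathcal{H}_A)$, $T_B\in B(\mathcal{H}_B)$ be self-adjoint, and let $K:=T_A\otimes I - I\otimes T_B$, and assume $K\neq 0$. Let $\kappa:=\min\{|\lambda|:\lambda\in\sigma(K),\ \lambda\ne 0\}$. Let $\epsilon\ge0$ and let $H\in B(\mathcal{H}_A\otimes\mathcal{H}_B)$ be self-adjoint with $\|[H,K]\|\le\epsilon$. Let $|\psi(0)\rangle\in\ker(K)$ with $\||\psi(0)\rangle\|=1$ and $|\psi(t)\rangle=e^{-iHt}|\psi(0)\rangle$. Then for all $t\in\mathbb{R}$, $\|\Pi_{\ker K}|\psi(t)\rangle\|^2\ge 1-\epsilon^2t^2/\kappa^2$, where $\Pi_{\ker K}$ is the orthogonal projection onto $\ker(K)$.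
   Context: $\sigma(K)$ is the spectrum of $K$; $\kappa$ is called the spectral gap of $K$. $\|\cdot\|$ on operators is the operator norm. *)

theory Defs
  imports Complex_Main
    "Jordan_Normal_Form.Spectral_Radius"
    "Jordan_Normal_Form.Schur_Decomposition"
    "Jordan_Normal_Form.Matrix_Kernel"
begin

text \<open>Finite-dimensional complex Hilbert spaces are modelled as C^m with
  the standard inner product; operators are complex matrices.\<close>

text \<open>Kronecker (tensor) product of matrices: A (p x q), B (r x s) gives a (p*r) x (q*s) matrix,
  with the standard index convention (i = i1*r + i2).\<close>
definition kron :: "complex mat \<Rightarrow> complex mat \<Rightarrow> complex mat" where
  "kron A B = mat (dim_row A * dim_row B) (dim_col A * dim_col B)
     (\<lambda>(i, j). A $$ (i div dim_row B, j div dim_col B) * B $$ (i mod dim_row B, j mod dim_col B))"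

definition self_adjoint :: "complex mat \<Rightarrow> bool" where
  "self_adjoint A \<longleftrightarrow> square_mat A \<and> mat_adjoint A = A"

definition vnorm :: "complex vec \<Rightarrow> real" where
  "vnorm v = sqrt (\<Sum>i<dim_vec v. (cmod (v $ i))\<^sup>2)"

definition opnorm :: "complex mat \<Rightarrow> real" where
  "opnorm A = Sup {vnorm (A *\<^sub>v v) | v. v \<in> carrier_vec (dim_col A) \<and> vnorm v \<le> 1}"

definition mexp :: "complex mat \<Rightarrow> complex mat" where
  "mexp A = mat (dim_row A) (dim_col A)
     (\<lambda>(i, j). \<Sum>k. (A ^\<^sub>m k) $$ (i, j) / of_nat (fact k))"

definition orth_proj :: "complex vec set \<Rightarrow> complex vec \<Rightarrow> complex vec" where
  "orth_proj V x = (THE p. p \<in> V \<and> (\<forall>w\<in>V. (x - p) \<bullet>c w = 0))"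

definition spectral_gap :: "complex mat \<Rightarrow> real" where
  "spectral_gap K = Min {cmod l | l. l \<in> spectrum K \<and> l \<noteq> 0}"

end

theory Submission
  imports Defs
begin

text \<open>
  Since \<open>H\<close> is self-adjoint the evolution preserves the norm, and
  \<open>G(t) = \<parallel>K \<psi>(t)\<parallel>\<^sup>2\<close> vanishes at \<open>t = 0\<close>. Writing \<open>KH = HK - [H,K]\<close>, the \<open>HK\<close> part does not
  contribute to \<open>G'\<close> because \<open>\<langle>HK\<psi>, K\<psi>\<rangle>\<close> is real, so \<open>|G'| \<le> 2 \<parallel>[H,K]\<psi>\<parallel> \<parallel>K\<psi>\<parallel> \<le> 2\<epsilon> \<surd>G\<close>,
  which integrates to \<open>\<parallel>K \<psi>(t)\<parallel> \<le> \<epsilon>|t|\<close>. Diagonalising the self-adjoint \<open>K\<close> by a unitary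
  matrix, the component of \<open>\<psi>(t)\<close> orthogonal to \<open>ker K\<close> lives on eigenvalues of modulus at least
  \<open>\<kappa>\<close>, so its norm is at most \<open>\<parallel>K \<psi>(t)\<parallel> / \<kappa>\<close>, and Pythagoras gives the bound.
\<close>

section \<open>Adjoints, unitary matrices and the Euclidean norm\<close>

lemma dim_mat_adjoint [simp]:
  "dim_row (mat_adjoint A) = dim_col A" "dim_col (mat_adjoint A) = dim_row A"
  unfolding mat_adjoint_def by auto

lemma index_mat_adjoint [simp]:
  fixes A :: "complex mat"
  shows "i < dim_col A \<Longrightarrow> j < dim_row A \<Longrightarrow> mat_adjoint A $$ (i, j) = cnj (A $$ (j, i))"
  unfolding mat_adjoint_def by (simp add: mat_of_rows_def)

lemma mat_adjoint_carrier_mat [simp]: "A \<in> carrier_mat n m \<Longrightarrow> mat_adjoint A \<in> carrier_mat m n"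
  by auto

lemma mat_adjoint_adjoint [simp]:
  fixes A :: "complex mat"
  shows "mat_adjoint (mat_adjoint A) = A"
  by (rule eq_matI) auto

lemma mat_adjoint_mult:
  fixes A :: "complex mat"
  assumes "A \<in> carrier_mat n k" "B \<in> carrier_mat k m"
  shows "mat_adjoint (A * B) = mat_adjoint B * mat_adjoint A"
  using assms by (intro eq_matI) (auto simp: scalar_prod_def mult.commute intro!: sum.cong)

lemma mat_adjoint_one [simp]: "mat_adjoint (1\<^sub>m n :: complex mat) = 1\<^sub>m n"
  by (rule eq_matI) auto

lemma mat_adjoint_minus:
  fixes A :: "complex mat"
  assumes "A \<in> carrier_mat n m" "B \<in> carrier_mat n m"
  shows "mat_adjoint (A - B) = mat_adjoint A - mat_adjoint B"
  using assms by (intro eq_matI) auto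

lemma index_mult_mat_vec_sum:
  "A \<in> carrier_mat n m \<Longrightarrow> v \<in> carrier_vec m \<Longrightarrow> i < n \<Longrightarrow> (A *\<^sub>v v) $ i = (\<Sum>j<m. A $$ (i, j) * v $ j)"
  by (auto simp: scalar_prod_def atLeast0LessThan)

lemma smult_mat_mult_mat_vec:
  fixes M :: "'a :: comm_ring mat"
  assumes "M \<in> carrier_mat n m" "v \<in> carrier_vec m"
  shows "(c \<cdot>\<^sub>m M) *\<^sub>v v = c \<cdot>\<^sub>v (M *\<^sub>v v)"
  using assms by (intro eq_vecI) (auto simp: scalar_prod_def sum_distrib_left mult.assoc)

lemma mat_diag_mult_vec:
  "v \<in> carrier_vec n \<Longrightarrow> mat_diag n d *\<^sub>v v = vec n (\<lambda>k. d k * v $ k)"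
  by (intro eq_vecI) (auto simp: mat_diag_def scalar_prod_def if_distrib[of "\<lambda>x. x * _"] cong: if_cong)

lemma cscalar_prod_mult_mat_vec:
  fixes A :: "complex mat"
  assumes "A \<in> carrier_mat n m" "v \<in> carrier_vec m" "w \<in> carrier_vec n"
  shows "(A *\<^sub>v v) \<bullet>c w = v \<bullet>c (mat_adjoint A *\<^sub>v w)"
  using assms
  by (simp add: scalar_prod_def sum_distrib_left sum_distrib_right mult_ac sum_conjugate
      sum.swap[of _ "{0..<n}"])

lemma cnj_cscalar_prod:
  assumes "v \<in> carrier_vec n" "w \<in> carrier_vec n"
  shows "cnj (w \<bullet>c v) = v \<bullet>c w"
  using assms by (simp add: scalar_prod_def atLeast0LessThan mult.commute)

lemma self_adjoint_one: "self_adjoint (1\<^sub>m n)"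
  unfolding self_adjoint_def by simp

lemma self_adjoint_minus:
  assumes "A \<in> carrier_mat n n" "B \<in> carrier_mat n n" "self_adjoint A" "self_adjoint B"
  shows "self_adjoint (A - B)"
  using assms unfolding self_adjoint_def by (simp add: mat_adjoint_minus)

lemma self_adjoint_congruence:
  assumes "self_adjoint A" "A \<in> carrier_mat n n" "W \<in> carrier_mat n m"
  shows "self_adjoint (mat_adjoint W * A * W)"
proof -
  have W': "mat_adjoint W \<in> carrier_mat m n"
    using assms(3) by simp
  have "mat_adjoint (mat_adjoint W * A * W) = mat_adjoint W * mat_adjoint (mat_adjoint W * A)"
    using mat_adjoint_mult[OF mult_carrier_mat[OF W' assms(2)] assms(3)] by simp
  also have "mat_adjoint (mat_adjoint W * A) = mat_adjoint A * W"
    using mat_adjoint_mult[OF W' assms(2)] by simp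
  also have "mat_adjoint W * (mat_adjoint A * W) = mat_adjoint W * mat_adjoint A * W"
    using assoc_mult_mat[OF W' mat_adjoint_carrier_mat[OF assms(2)] assms(3)] by simp
  finally show ?thesis
    using assms(1,2) W' unfolding self_adjoint_def by simp
qed

lemma cscalar_prod_self_adjoint_real:
  assumes "self_adjoint H" "H \<in> carrier_mat n n" "v \<in> carrier_vec n"
  shows "Im ((H *\<^sub>v v) \<bullet>c v) = 0"
proof -
  have "(H *\<^sub>v v) \<bullet>c v = v \<bullet>c (H *\<^sub>v v)"
    using assms by (simp add: cscalar_prod_mult_mat_vec self_adjoint_def)
  also have "\<dots> = cnj ((H *\<^sub>v v) \<bullet>c v)"
    using assms by (simp add: cnj_cscalar_prod[of _ n])
  finally show ?thesis
    by (metis Reals_cnj_iff complex_is_Real_iff)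
qed

definition unitary :: "complex mat \<Rightarrow> bool" where
  "unitary U \<longleftrightarrow> square_mat U \<and> mat_adjoint U * U = 1\<^sub>m (dim_row U) \<and> U * mat_adjoint U = 1\<^sub>m (dim_row U)"

lemma unitaryI:
  assumes "U \<in> carrier_mat n n" "mat_adjoint U * U = 1\<^sub>m n"
  shows "unitary U"
  using assms mat_mult_left_right_inverse[OF mat_adjoint_carrier_mat[OF assms(1)] assms]
  unfolding unitary_def by auto

lemma unitaryD:
  assumes "unitary U" "U \<in> carrier_mat n n"
  shows "mat_adjoint U * U = 1\<^sub>m n" "U * mat_adjoint U = 1\<^sub>m n"
  using assms unfolding unitary_def by auto

lemma unitary_adjoint: "unitary U \<Longrightarrow> unitary (mat_adjoint U)"
  unfolding unitary_def by auto

lemma unitary_mult: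
  assumes "unitary U" "unitary V" "U \<in> carrier_mat n n" "V \<in> carrier_mat n n"
  shows "unitary (U * V)"
proof (rule unitaryI)
  show "U * V \<in> carrier_mat n n" using assms by simp
  have "mat_adjoint (U * V) * (U * V) = mat_adjoint V * ((mat_adjoint U * U) * V)"
    using assms by (simp add: mat_adjoint_mult assoc_mult_mat[of _ n n _ n _ n])
  then show "mat_adjoint (U * V) * (U * V) = 1\<^sub>m n"
    using assms by (simp add: unitaryD)
qed

lemma unitary_cancel:
  assumes "unitary U" "U \<in> carrier_mat n n" "v \<in> carrier_vec n"
  shows "mat_adjoint U *\<^sub>v (U *\<^sub>v v) = v" "U *\<^sub>v (mat_adjoint U *\<^sub>v v) = v"
  using assms by (simp_all add: unitaryD flip: assoc_mult_mat_vec[of _ n n _ n])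

lemma unitary_mult_vec_eq_zero_iff:
  assumes "unitary U" "U \<in> carrier_mat n n" "z \<in> carrier_vec n"
  shows "U *\<^sub>v z = 0\<^sub>v n \<longleftrightarrow> z = 0\<^sub>v n"
proof
  assume "U *\<^sub>v z = 0\<^sub>v n"
  then have "mat_adjoint U *\<^sub>v (U *\<^sub>v z) = 0\<^sub>v n"
    using assms(2) by auto
  then show "z = 0\<^sub>v n"
    using unitary_cancel(1)[OF assms] by simp
qed (use assms(2) in auto)

lemma vnorm_nonneg: "vnorm v \<ge> 0"
  unfolding vnorm_def by (simp add: sum_nonneg)

lemma power2_vnorm: "(vnorm v)\<^sup>2 = (\<Sum>i<dim_vec v. (cmod (v $ i))\<^sup>2)"
  unfolding vnorm_def by (simp add: sum_nonneg)

lemma cscalar_prod_self: "v \<bullet>c v = complex_of_real ((vnorm v)\<^sup>2)"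
  unfolding power2_vnorm scalar_prod_def
  by (simp add: atLeast0LessThan of_real_sum complex_norm_square del: of_real_power)

lemma vnorm_unitary:
  assumes "unitary U" "U \<in> carrier_mat n n" "v \<in> carrier_vec n"
  shows "vnorm (U *\<^sub>v v) = vnorm v"
proof -
  have "(U *\<^sub>v v) \<bullet>c (U *\<^sub>v v) = v \<bullet>c v"
    using assms by (simp add: cscalar_prod_mult_mat_vec unitary_cancel)
  then have "(vnorm (U *\<^sub>v v))\<^sup>2 = (vnorm v)\<^sup>2"
    by (metis cscalar_prod_self of_real_eq_iff)
  then show ?thesis
    using vnorm_nonneg power2_eq_imp_eq by blast
qed

lemma cauchy_schwarz_sum:
  fixes a b :: "'i \<Rightarrow> real"
  shows "(\<Sum>i\<in>I. a i * b i)\<^sup>2 \<le> (\<Sum>i\<in>I. (a i)\<^sup>2) * (\<Sum>i\<in>I. (b i)\<^sup>2)"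
proof -
  have "0 \<le> (\<Sum>i\<in>I. \<Sum>j\<in>I. (a i * b j - a j * b i)\<^sup>2)"
    by (intro sum_nonneg) simp
  also have "\<dots> = (\<Sum>i\<in>I. \<Sum>j\<in>I. (a i)\<^sup>2 * (b j)\<^sup>2) + (\<Sum>i\<in>I. \<Sum>j\<in>I. (a j)\<^sup>2 * (b i)\<^sup>2)
      - 2 * (\<Sum>i\<in>I. \<Sum>j\<in>I. (a i * b i) * (a j * b j))"
    by (simp add: sum_subtractf sum.distrib sum_distrib_left power2_eq_square algebra_simps)
  also have "\<dots> = 2 * ((\<Sum>i\<in>I. (a i)\<^sup>2) * (\<Sum>i\<in>I. (b i)\<^sup>2) - (\<Sum>i\<in>I. a i * b i)\<^sup>2)"
    by (simp add: sum_product power2_eq_square sum.swap[of "\<lambda>i j. a j * a j * (b i * b i)"])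
  finally show ?thesis by simp
qed

lemma cauchy_schwarz:
  assumes "v \<in> carrier_vec n" "w \<in> carrier_vec n"
  shows "cmod (v \<bullet>c w) \<le> vnorm v * vnorm w"
proof -
  have "cmod (v \<bullet>c w) = cmod (\<Sum>i<n. v $ i * cnj (w $ i))"
    using assms by (simp add: scalar_prod_def atLeast0LessThan)
  also have "\<dots> \<le> (\<Sum>i<n. cmod (v $ i) * cmod (w $ i))"
    by (rule order_trans[OF norm_sum]) (simp add: norm_mult)
  also have "\<dots> \<le> vnorm v * vnorm w"
  proof (rule power2_le_imp_le)
    have "(\<Sum>i<n. cmod (v $ i) * cmod (w $ i))\<^sup>2 \<le> (\<Sum>i<n. (cmod (v $ i))\<^sup>2) * (\<Sum>i<n. (cmod (w $ i))\<^sup>2)"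
      by (rule cauchy_schwarz_sum)
    also have "\<dots> = (vnorm v * vnorm w)\<^sup>2"
      using assms by (simp add: power2_vnorm power_mult_distrib)
    finally show "(\<Sum>i<n. cmod (v $ i) * cmod (w $ i))\<^sup>2 \<le> (vnorm v * vnorm w)\<^sup>2" .
  qed (simp add: vnorm_nonneg)
  finally show ?thesis .
qed

lemma vnorm_mult_mat_vec_le_frobenius:
  assumes "A \<in> carrier_mat n m" "v \<in> carrier_vec m"
  shows "(vnorm (A *\<^sub>v v))\<^sup>2 \<le> (\<Sum>i<n. \<Sum>j<m. (cmod (A $$ (i, j)))\<^sup>2) * (vnorm v)\<^sup>2"
proof -
  have row: "(cmod ((A *\<^sub>v v) $ i))\<^sup>2 \<le> (\<Sum>j<m. (cmod (A $$ (i, j)))\<^sup>2) * (vnorm v)\<^sup>2"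
    if "i < n" for i
  proof -
    have "cmod ((A *\<^sub>v v) $ i) \<le> (\<Sum>j<m. cmod (A $$ (i, j)) * cmod (v $ j))"
      using assms that
      by (auto simp: scalar_prod_def atLeast0LessThan norm_mult intro: order_trans[OF norm_sum])
    then have "(cmod ((A *\<^sub>v v) $ i))\<^sup>2 \<le> (\<Sum>j<m. cmod (A $$ (i, j)) * cmod (v $ j))\<^sup>2"
      by (intro power_mono) auto
    also have "\<dots> \<le> (\<Sum>j<m. (cmod (A $$ (i, j)))\<^sup>2) * (\<Sum>j<m. (cmod (v $ j))\<^sup>2)"
      by (rule cauchy_schwarz_sum)
    also have "\<dots> = (\<Sum>j<m. (cmod (A $$ (i, j)))\<^sup>2) * (vnorm v)\<^sup>2"
      using assms by (simp add: power2_vnorm)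
    finally show ?thesis .
  qed
  have "(vnorm (A *\<^sub>v v))\<^sup>2 = (\<Sum>i<n. (cmod ((A *\<^sub>v v) $ i))\<^sup>2)"
    using assms by (simp add: power2_vnorm)
  also have "\<dots> \<le> (\<Sum>i<n. (\<Sum>j<m. (cmod (A $$ (i, j)))\<^sup>2) * (vnorm v)\<^sup>2)"
    by (intro sum_mono row) simp
  finally show ?thesis
    by (simp add: sum_distrib_right)
qed

lemma vnorm_le_opnorm:
  assumes "A \<in> carrier_mat n m" "v \<in> carrier_vec m" "vnorm v \<le> 1"
  shows "vnorm (A *\<^sub>v v) \<le> opnorm A"
  unfolding opnorm_def
proof (rule cSup_upper)
  define F where "F = (\<Sum>i<n. \<Sum>j<m. (cmod (A $$ (i, j)))\<^sup>2)"
  have "vnorm (A *\<^sub>v w) \<le> sqrt F" if "w \<in> carrier_vec m" "vnorm w \<le> 1" for w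
  proof (rule real_le_rsqrt)
    have "(vnorm w)\<^sup>2 \<le> 1"
      using that vnorm_nonneg by (simp add: power_le_one)
    moreover have "F \<ge> 0"
      unfolding F_def by (intro sum_nonneg) simp
    ultimately show "(vnorm (A *\<^sub>v w))\<^sup>2 \<le> F"
      using vnorm_mult_mat_vec_le_frobenius[OF assms(1) that(1)] mult_left_le[of "(vnorm w)\<^sup>2" F]
      unfolding F_def by linarith
  qed
  then show "bdd_above {vnorm (A *\<^sub>v v) |v. v \<in> carrier_vec (dim_col A) \<and> vnorm v \<le> 1}"
    using assms(1) by (intro bdd_aboveI[of _ "sqrt F"]) auto
qed (use assms in auto)

section \<open>Unitary diagonalization of self-adjoint matrices\<close>

lemma unitary_mat_of_cols:
  assumes "set ws \<subseteq> carrier_vec n" "length ws = n"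
    and "\<And>i j. i < n \<Longrightarrow> j < n \<Longrightarrow> ws ! j \<bullet>c ws ! i = (if i = j then 1 else 0)"
  shows "unitary (mat_of_cols n ws)"
proof (rule unitaryI)
  show W: "mat_of_cols n ws \<in> carrier_mat n n"
    using assms(2) by auto
  have ws: "ws ! i \<in> carrier_vec n" if "i < n" for i
    using assms(1,2) that nth_mem by blast
  show "mat_adjoint (mat_of_cols n ws) * mat_of_cols n ws = 1\<^sub>m n"
  proof (rule eq_matI)
    fix i j assume "i < dim_row (1\<^sub>m n :: complex mat)" "j < dim_col (1\<^sub>m n :: complex mat)"
    then have ij: "i < n" "j < n" by auto
    have "(mat_adjoint (mat_of_cols n ws) * mat_of_cols n ws) $$ (i, j) = ws ! j \<bullet>c ws ! i"
      using W ij ws[of i] ws[of j] assms(2)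
      by (simp add: scalar_prod_def mat_of_cols_def mult.commute)
    then show "(mat_adjoint (mat_of_cols n ws) * mat_of_cols n ws) $$ (i, j) = 1\<^sub>m n $$ (i, j)"
      using assms(3) ij by simp
  qed (use assms(2) in auto)
qed

lemma unitary_with_first_col:
  assumes v: "v \<in> carrier_vec n" and v0: "v \<noteq> 0\<^sub>v n"
  obtains W c where "W \<in> carrier_mat n n" "unitary W" "col W 0 = c \<cdot>\<^sub>v v"
proof -
  interpret cof_vec_space n "TYPE(complex)" .
  note b = basis_completion[OF v v0]
  define ws where "ws = gram_schmidt n (basis_completion v)"
  note g = gram_schmidt_result[OF b(2,4,5) ws_def]
  have len: "length ws = n" and ws: "set ws \<subseteq> carrier_vec n"
    using g(3,4) b(6) by auto
  have n0: "n > 0"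
    using v v0 by (cases n) auto
  have hd: "hd ws = v"
    using v n0 b(6,7) unfolding ws_def by (cases "basis_completion v") auto
  define nrm where "nrm w = complex_of_real (1 / vnorm w)" for w
  define us where "us = map (\<lambda>w. nrm w \<cdot>\<^sub>v w) ws"
  have orthonormal: "us ! j \<bullet>c us ! i = (if i = j then 1 else 0)" if "i < n" "j < n" for i j
  proof -
    have "ws ! i \<in> carrier_vec n" "ws ! j \<in> carrier_vec n"
      using ws len that nth_mem by blast+
    then have "us ! j \<bullet>c us ! i = nrm (ws ! j) * cnj (nrm (ws ! i)) * (ws ! j \<bullet>c ws ! i)"
      using len that
      by (simp add: us_def conjugate_smult_vec smult_scalar_prod_distrib scalar_prod_smult_distrib)
    moreover have "ws ! i \<bullet>c ws ! i = complex_of_real ((vnorm (ws ! i))\<^sup>2)"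
      by (rule cscalar_prod_self)
    moreover have "ws ! i \<bullet>c ws ! i \<noteq> 0" "i \<noteq> j \<Longrightarrow> ws ! j \<bullet>c ws ! i = 0"
      using corthogonalD[OF g(2)] len that by auto
    ultimately show ?thesis
      by (auto simp: nrm_def power2_eq_square)
  qed
  show ?thesis
  proof
    show "mat_of_cols n us \<in> carrier_mat n n" "unitary (mat_of_cols n us)"
      using ws len orthonormal by (auto simp: us_def subset_iff intro!: unitary_mat_of_cols)
    have "us ! 0 = nrm v \<cdot>\<^sub>v v"
      using n0 len hd hd_conv_nth[of ws] by (auto simp: us_def)
    then show "col (mat_of_cols n us) 0 = nrm v \<cdot>\<^sub>v v"
      using n0 len v by (simp add: us_def)
  qed
qed

definition block_diag_mat :: "complex \<Rightarrow> complex mat \<Rightarrow> complex mat" where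
  "block_diag_mat a B = four_block_mat (mat 1 1 (\<lambda>_. a)) (0\<^sub>m 1 (dim_col B)) (0\<^sub>m (dim_row B) 1) B"

lemma dim_block_diag_mat [simp]:
  "dim_row (block_diag_mat a B) = Suc (dim_row B)" "dim_col (block_diag_mat a B) = Suc (dim_col B)"
  unfolding block_diag_mat_def by auto

lemma index_block_diag_mat [simp]:
  "i < Suc (dim_row B) \<Longrightarrow> j < Suc (dim_col B) \<Longrightarrow> block_diag_mat a B $$ (i, j) =
    (if i = 0 \<and> j = 0 then a else if i = 0 \<or> j = 0 then 0 else B $$ (i - 1, j - 1))"
  unfolding block_diag_mat_def by auto

lemma block_diag_mat_carrier [simp]:
  "B \<in> carrier_mat n n \<Longrightarrow> block_diag_mat a B \<in> carrier_mat (Suc n) (Suc n)"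
  by auto

lemma block_diag_mat_mult:
  assumes "B \<in> carrier_mat n n" "C \<in> carrier_mat n n"
  shows "block_diag_mat a B * block_diag_mat c C = block_diag_mat (a * c) (B * C)"
proof -
  have blocks: "mat 1 1 f \<in> carrier_mat 1 1" "0\<^sub>m 1 n \<in> carrier_mat 1 n" "0\<^sub>m n 1 \<in> carrier_mat n 1"
    for f :: "nat \<times> nat \<Rightarrow> complex"
    by auto
  have "mat 1 1 (\<lambda>_. a) * mat 1 1 (\<lambda>_. c) = mat 1 1 (\<lambda>_. a * c)"
    by (rule eq_matI) (auto simp: scalar_prod_def)
  moreover have "block_diag_mat x M = four_block_mat (mat 1 1 (\<lambda>_. x)) (0\<^sub>m 1 n) (0\<^sub>m n 1) M"
    if "M \<in> carrier_mat n n" for x M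
    using that by (simp add: block_diag_mat_def)
  ultimately show ?thesis
    using assms by (simp del: One_nat_def add: mult_four_block_mat[OF blocks assms(1) blocks assms(2)])
qed

lemma mat_adjoint_block_diag_mat:
  "mat_adjoint (block_diag_mat a B) = block_diag_mat (cnj a) (mat_adjoint B)"
  by (rule eq_matI) auto

lemma block_diag_mat_one: "block_diag_mat 1 (1\<^sub>m n) = 1\<^sub>m (Suc n)"
  by (rule eq_matI) auto

lemma block_diag_mat_diag: "block_diag_mat a (mat_diag n d) = mat_diag (Suc n) (case_nat a d)"
  unfolding mat_diag_def by (rule eq_matI) (auto split: nat.split)

lemma unitary_block_diag_mat:
  assumes "unitary U" "U \<in> carrier_mat n n"
  shows "unitary (block_diag_mat 1 U)"
  using assms
  by (intro unitaryI[of _ "Suc n"])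
    (simp_all add: mat_adjoint_block_diag_mat unitaryD block_diag_mat_one
      block_diag_mat_mult[OF mat_adjoint_carrier_mat[OF assms(2)] assms(2)])

lemma self_adjoint_block_diag_of_first_col:
  assumes A: "A \<in> carrier_mat (Suc n) (Suc n)" "self_adjoint A"
    and col: "col A 0 = e \<cdot>\<^sub>v unit_vec (Suc n) 0"
  defines "B \<equiv> mat n n (\<lambda>(i, j). A $$ (Suc i, Suc j))"
  shows "A = block_diag_mat e B" "self_adjoint B"
proof -
  have adj: "A $$ (i, j) = cnj (A $$ (j, i))" if "i < Suc n" "j < Suc n" for i j
    using A that index_mat_adjoint[of i A j] unfolding self_adjoint_def by auto
  have col0: "A $$ (i, 0) = (if i = 0 then e else 0)" if "i < Suc n" for i
    using arg_cong[OF col, of "\<lambda>v. v $ i"] A that by auto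
  have row0: "A $$ (0, j) = (if j = 0 then e else 0)" if "j < Suc n" for j
    using adj[OF _ that, of 0] col0[OF that] col0[of 0] by auto
  show "A = block_diag_mat e B"
    using A col0 row0 unfolding B_def by (intro eq_matI) auto
  show "self_adjoint B"
  proof -
    have "mat_adjoint B = B"
    proof (rule eq_matI)
      fix i j assume "i < dim_row B" "j < dim_col B"
      then show "mat_adjoint B $$ (i, j) = B $$ (i, j)"
        using adj[of "Suc i" "Suc j"] by (simp add: B_def)
    qed (simp_all add: B_def)
    then show ?thesis
      unfolding self_adjoint_def B_def by simp
  qed
qed

text \<open>
  Conjugating by a unitary matrix whose first column is an eigenvector turns the first column into
  \<open>e \<cdot> e\<^sub>0\<close>; self-adjointness then clears the first row as well.
\<close>

lemma self_adjoint_deflation: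
  assumes A: "A \<in> carrier_mat (Suc n) (Suc n)" "self_adjoint A"
  obtains W e B where "W \<in> carrier_mat (Suc n) (Suc n)" "unitary W" "B \<in> carrier_mat n n"
    "self_adjoint B" "A * W = W * block_diag_mat e B"
proof -
  obtain e v where v: "v \<in> carrier_vec (Suc n)" "v \<noteq> 0\<^sub>v (Suc n)" "A *\<^sub>v v = e \<cdot>\<^sub>v v"
    using spectrum_non_empty[OF A(1)] A(1)
    unfolding spectrum_def eigenvalue_def eigenvector_def by auto
  obtain W c where W: "W \<in> carrier_mat (Suc n) (Suc n)" "unitary W" and Wv: "col W 0 = c \<cdot>\<^sub>v v"
    using unitary_with_first_col[OF v(1,2)] .
  have W': "mat_adjoint W \<in> carrier_mat (Suc n) (Suc n)"
    using W by simp
  define A' where "A' = mat_adjoint W * A * W"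
  have A': "A' \<in> carrier_mat (Suc n) (Suc n)" "self_adjoint A'"
    unfolding A'_def using A W self_adjoint_congruence by auto
  have "col A' 0 = mat_adjoint W *\<^sub>v col (A * W) 0"
    using A W W' col_mult2[OF W' mult_carrier_mat[OF A(1) W(1)]]
    by (simp add: A'_def assoc_mult_mat[of _ "Suc n" "Suc n" _ "Suc n" _ "Suc n"])
  also have "col (A * W) 0 = A *\<^sub>v col W 0"
    using A W col_mult2 by blast
  also have "A *\<^sub>v col W 0 = e \<cdot>\<^sub>v col W 0"
    using A v by (simp add: Wv mult_mat_vec smult_smult_assoc mult.commute)
  also have "mat_adjoint W *\<^sub>v (e \<cdot>\<^sub>v col W 0) = e \<cdot>\<^sub>v col (mat_adjoint W * W) 0"
    using W(1) mult_mat_vec[OF W', of "col W 0" e] col_mult2[OF W' W(1), of 0]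
    by (simp add: carrier_vecI)
  finally have "col A' 0 = e \<cdot>\<^sub>v unit_vec (Suc n) 0"
    using W by (simp add: unitaryD)
  then obtain B where "A' = block_diag_mat e B" "B \<in> carrier_mat n n" "self_adjoint B"
    using self_adjoint_block_diag_of_first_col[OF A'] by fastforce
  moreover have "W * A' = (W * mat_adjoint W) * (A * W)"
    using assoc_mult_mat[OF W(1) W' mult_carrier_mat[OF A(1) W(1)]]
    by (simp add: A'_def assoc_mult_mat[OF W' A(1) W(1)])
  then have "A * W = W * A'"
    using A W by (simp add: unitaryD)
  ultimately show ?thesis
    using that W by blast
qed

lemma self_adjoint_unitary_diagonalization:
  assumes "A \<in> carrier_mat n n" "self_adjoint A"
  shows "\<exists>U d. U \<in> carrier_mat n n \<and> unitary U \<and> A * U = U * mat_diag n d"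
  using assms
proof (induction n arbitrary: A)
  case 0
  then show ?case
    by (intro exI[of _ "1\<^sub>m 0"] exI[of _ "\<lambda>_. 0"]) (auto intro!: unitaryI eq_matI simp: mat_diag_def)
next
  case (Suc n)
  obtain W e B where W: "W \<in> carrier_mat (Suc n) (Suc n)" "unitary W" and B: "B \<in> carrier_mat n n"
    "self_adjoint B" and AW: "A * W = W * block_diag_mat e B"
    using self_adjoint_deflation[OF Suc.prems] .
  obtain V d where V: "V \<in> carrier_mat n n" "unitary V" and BV: "B * V = V * mat_diag n d"
    using Suc.IH[OF B] by blast
  define U where "U = W * block_diag_mat 1 V"
  have U: "U \<in> carrier_mat (Suc n) (Suc n)" "unitary U"
    unfolding U_def using W V unitary_block_diag_mat unitary_mult by auto
  have V1: "block_diag_mat 1 V \<in> carrier_mat (Suc n) (Suc n)"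
    using V by simp
  have "A * U = W * (block_diag_mat e B * block_diag_mat 1 V)"
    using assoc_mult_mat[OF Suc.prems(1) W(1) V1] assoc_mult_mat[OF W(1) _ V1, of "block_diag_mat e B"] B
    by (simp add: U_def AW)
  also have "block_diag_mat e B * block_diag_mat 1 V = block_diag_mat 1 V * block_diag_mat e (mat_diag n d)"
    using B V by (simp add: block_diag_mat_mult BV)
  also have "W * (block_diag_mat 1 V * block_diag_mat e (mat_diag n d)) = U * mat_diag (Suc n) (case_nat e d)"
    using assoc_mult_mat[OF W(1) V1 block_diag_mat_carrier[OF mat_diag_dim]]
    by (simp add: U_def block_diag_mat_diag)
  finally show ?case
    using U by blast
qed

section \<open>Projection onto the kernel and the spectral gap\<close>

lemma orth_proj_eqI:
  assumes V: "V \<subseteq> carrier_vec n" "\<And>v w. v \<in> V \<Longrightarrow> w \<in> V \<Longrightarrow> v - w \<in> V"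
    and x: "x \<in> carrier_vec n" and p: "p \<in> V" "\<And>w. w \<in> V \<Longrightarrow> (x - p) \<bullet>c w = 0"
  shows "orth_proj V x = p"
  unfolding orth_proj_def
proof (rule the_equality)
  fix q assume q: "q \<in> V \<and> (\<forall>w\<in>V. (x - q) \<bullet>c w = 0)"
  have carrier: "p \<in> carrier_vec n" "q \<in> carrier_vec n" "p - q \<in> carrier_vec n"
    using V p q by auto
  have "(p - q) \<bullet>c (p - q) = (x - q) \<bullet>c (p - q) - (x - p) \<bullet>c (p - q)"
  proof -
    have "p - q = (x - q) - (x - p)"
      using x carrier by (intro eq_vecI) auto
    then show ?thesis
      using x carrier by (metis minus_carrier_vec minus_scalar_prod_distrib carrier_vec_conjugate)
  qed
  also have "\<dots> = 0"
    using p q V(2)[OF p(1), of q] by simp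
  finally have pq: "p - q = 0\<^sub>v n"
    using carrier by simp
  have "q $ i = p $ i" if "i < n" for i
    using arg_cong[OF pq, of "\<lambda>v. v $ i"] that carrier by auto
  then show "q = p"
    using carrier by (intro eq_vecI) auto
qed (use p in blast)

lemma spectral_gap_le:
  assumes "K \<in> carrier_mat n n" "l \<in> spectrum K" "l \<noteq> 0"
  shows "spectral_gap K \<le> cmod l"
  unfolding spectral_gap_def using assms card_finite_spectrum(1)[OF assms(1)]
  by (intro Min_le) auto

lemma spectral_gap_pos:
  assumes "K \<in> carrier_mat n n" "l \<in> spectrum K" "l \<noteq> 0"
  shows "spectral_gap K > 0"
  unfolding spectral_gap_def using assms card_finite_spectrum(1)[OF assms(1)]
  by (subst Min_gr_iff) auto

text \<open>
  In the coordinates \<open>z = U\<^sup>* x\<close> the matrix \<open>K\<close> acts as multiplication by \<open>d\<close>, so \<open>ker K\<close>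
  consists of the vectors whose coordinates vanish wherever \<open>d k \<noteq> 0\<close>.
\<close>

context
  fixes K U :: "complex mat" and d :: "nat \<Rightarrow> complex" and n :: nat
  assumes K: "K \<in> carrier_mat n n" and U: "U \<in> carrier_mat n n" "unitary U"
    and KU: "K * U = U * mat_diag n d"
begin

lemma unitary_diagonalization_eq: "K = U * mat_diag n d * mat_adjoint U"
  using K U KU by (simp add: unitaryD assoc_mult_mat[of _ n n _ n _ n] flip: KU)

lemma diagonal_entry_in_spectrum:
  assumes "k < n"
  shows "d k \<in> spectrum K"
proof -
  have "similar_mat K (mat_diag n d)"
    using K U unitary_diagonalization_eq
    by (intro similar_matI[of K "mat_diag n d" U "mat_adjoint U" n]) (auto simp: unitaryD)
  then have "char_poly K = (\<Prod>a \<leftarrow> diag_mat (mat_diag n d). [:- a, 1:])"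
    by (simp add: char_poly_similar char_poly_upper_triangular[of _ n] upper_triangular_def mat_diag_def)
  moreover have "d k \<in> set (diag_mat (mat_diag n d))"
    using assms by (auto simp: diag_mat_def mat_diag_def)
  ultimately show ?thesis
    using K by (simp add: spectrum_root_char_poly linear_poly_root)
qed

lemma mult_mat_vec_diagonalization:
  assumes "x \<in> carrier_vec n"
  shows "K *\<^sub>v x = U *\<^sub>v vec n (\<lambda>k. d k * (mat_adjoint U *\<^sub>v x) $ k)"
proof -
  have z: "mat_adjoint U *\<^sub>v x \<in> carrier_vec n"
    using mult_mat_vec_carrier[OF mat_adjoint_carrier_mat[OF U(1)] assms] .
  have "K *\<^sub>v x = U *\<^sub>v (mat_diag n d *\<^sub>v (mat_adjoint U *\<^sub>v x))"
    using assms U unitary_diagonalization_eq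
    by (simp add: assoc_mult_mat_vec[of _ n n _ n] assoc_mult_mat_vec[OF U(1) mat_diag_dim z])
  then show ?thesis
    using z by (simp add: mat_diag_mult_vec)
qed

lemma mat_kernel_diagonalization:
  "w \<in> mat_kernel K \<longleftrightarrow> w \<in> carrier_vec n \<and> (\<forall>k<n. d k * (mat_adjoint U *\<^sub>v w) $ k = 0)"
proof (cases "w \<in> carrier_vec n")
  case True
  then have "K *\<^sub>v w = 0\<^sub>v n \<longleftrightarrow> vec n (\<lambda>k. d k * (mat_adjoint U *\<^sub>v w) $ k) = 0\<^sub>v n"
    using unitary_mult_vec_eq_zero_iff[OF U(2,1)] by (simp add: mult_mat_vec_diagonalization)
  then show ?thesis
    using K True by (auto simp: mat_kernel_def vec_eq_iff)
qed (use K in \<open>auto simp: mat_kernel_def\<close>)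

lemma orth_proj_mat_kernel_diagonalization:
  assumes x: "x \<in> carrier_vec n"
  defines "z \<equiv> mat_adjoint U *\<^sub>v x"
  shows "orth_proj (mat_kernel K) x = U *\<^sub>v vec n (\<lambda>k. if d k = 0 then z $ k else 0)"
proof (rule orth_proj_eqI)
  define z0 where "z0 = vec n (\<lambda>k. if d k = 0 then z $ k else 0)"
  define z1 where "z1 = vec n (\<lambda>k. if d k = 0 then 0 else z $ k)"
  have z: "z \<in> carrier_vec n"
    unfolding z_def using mult_mat_vec_carrier[OF mat_adjoint_carrier_mat[OF U(1)] x] .
  show "mat_kernel K \<subseteq> carrier_vec n"
    using mat_kernel_carrier[OF K] .
  show "v - w \<in> mat_kernel K" if "v \<in> mat_kernel K" "w \<in> mat_kernel K" for v w
    using that K mult_minus_distrib_mat_vec[OF K] by (auto simp: mat_kernel_def)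
  show "U *\<^sub>v z0 \<in> mat_kernel K"
    using U by (simp add: mat_kernel_diagonalization unitary_cancel z0_def)
  have "x - U *\<^sub>v z0 = U *\<^sub>v z1"
  proof -
    have "x - U *\<^sub>v z0 = U *\<^sub>v (z - z0)"
      using U x z unitary_cancel(2)[OF U(2,1) x]
      by (simp add: z_def z0_def mult_minus_distrib_mat_vec[OF U(1)])
    also have "z - z0 = z1"
      using z by (intro eq_vecI) (auto simp: z0_def z1_def)
    finally show ?thesis .
  qed
  moreover have "z1 \<bullet>c (mat_adjoint U *\<^sub>v w) = 0" if "w \<in> mat_kernel K" for w
  proof -
    define \<zeta> where "\<zeta> = mat_adjoint U *\<^sub>v w"
    have "\<zeta> \<in> carrier_vec n" "\<forall>k<n. d k * \<zeta> $ k = 0"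
      using that mult_mat_vec_carrier[OF mat_adjoint_carrier_mat[OF U(1)]]
      by (auto simp: mat_kernel_diagonalization \<zeta>_def)
    then show ?thesis
      unfolding \<zeta>_def[symmetric] by (auto simp: z1_def scalar_prod_def intro!: sum.neutral)
  qed
  ultimately show "(x - U *\<^sub>v z0) \<bullet>c w = 0" if "w \<in> mat_kernel K" for w
    using that U(1) mat_kernel_diagonalization
    by (simp add: cscalar_prod_mult_mat_vec[OF U(1)] z1_def)
qed (use x in simp)

lemma vnorm_orth_proj_mat_kernel_ge_diagonal:
  assumes x: "x \<in> carrier_vec n" and gap: "\<kappa> > 0" "\<And>k. k < n \<Longrightarrow> d k \<noteq> 0 \<Longrightarrow> \<kappa> \<le> cmod (d k)"
  shows "(vnorm x)\<^sup>2 - (vnorm (K *\<^sub>v x) / \<kappa>)\<^sup>2 \<le> (vnorm (orth_proj (mat_kernel K) x))\<^sup>2"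
proof -
  define z where "z = mat_adjoint U *\<^sub>v x"
  have z: "z \<in> carrier_vec n"
    unfolding z_def using mult_mat_vec_carrier[OF mat_adjoint_carrier_mat[OF U(1)] x] .
  define perp where "perp = (\<Sum>k<n. if d k = 0 then 0 else (cmod (z $ k))\<^sup>2)"
  have "(vnorm x)\<^sup>2 = (vnorm z)\<^sup>2"
    using vnorm_unitary[OF unitary_adjoint[OF U(2)] mat_adjoint_carrier_mat[OF U(1)] x]
    by (simp add: z_def)
  also have "\<dots> = (\<Sum>k<n. (cmod (z $ k))\<^sup>2)"
    using z by (simp add: power2_vnorm)
  also have "\<dots> = (\<Sum>k<n. if d k = 0 then (cmod (z $ k))\<^sup>2 else 0) + perp"
    unfolding perp_def by (simp add: if_distrib[of "\<lambda>t. t + _"] flip: sum.distrib cong: if_cong)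
  also have "(\<Sum>k<n. if d k = 0 then (cmod (z $ k))\<^sup>2 else 0) = (vnorm (vec n (\<lambda>k. if d k = 0 then z $ k else 0)))\<^sup>2"
    by (simp add: power2_vnorm if_distrib[of "\<lambda>t. (cmod t)\<^sup>2"] cong: if_cong)
  also have "\<dots> = (vnorm (orth_proj (mat_kernel K) x))\<^sup>2"
    unfolding z_def using vnorm_unitary[OF U(2,1) vec_carrier]
    by (simp add: orth_proj_mat_kernel_diagonalization[OF x])
  finally have split: "(vnorm x)\<^sup>2 = (vnorm (orth_proj (mat_kernel K) x))\<^sup>2 + perp" .
  have "\<kappa>\<^sup>2 * perp = (\<Sum>k<n. if d k = 0 then 0 else \<kappa>\<^sup>2 * (cmod (z $ k))\<^sup>2)"
    by (simp add: perp_def sum_distrib_left if_distrib[of "\<lambda>t. \<kappa>\<^sup>2 * t"] cong: if_cong)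
  also have "\<dots> \<le> (\<Sum>k<n. (cmod (d k * z $ k))\<^sup>2)"
    using gap by (intro sum_mono) (auto simp: norm_mult power_mult_distrib intro!: mult_right_mono power_mono)
  also have "\<dots> = (vnorm (K *\<^sub>v x))\<^sup>2"
    using vnorm_unitary[OF U(2,1)]
    by (simp add: mult_mat_vec_diagonalization[OF x] power2_vnorm z_def)
  finally have "perp \<le> (vnorm (K *\<^sub>v x) / \<kappa>)\<^sup>2"
    using gap(1) by (simp add: power_divide field_simps)
  then show ?thesis
    using split by simp
qed

end

lemma vnorm_orth_proj_mat_kernel_ge:
  assumes K: "K \<in> carrier_mat n n" "self_adjoint K" "K \<noteq> 0\<^sub>m n n" and x: "x \<in> carrier_vec n"
  shows "(vnorm x)\<^sup>2 - (vnorm (K *\<^sub>v x) / spectral_gap K)\<^sup>2 \<le> (vnorm (orth_proj (mat_kernel K) x))\<^sup>2"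
proof -
  obtain U d where U: "U \<in> carrier_mat n n" "unitary U" and KU: "K * U = U * mat_diag n d"
    using self_adjoint_unitary_diagonalization[OF K(1,2)] by blast
  have "\<exists>k<n. d k \<noteq> 0"
  proof (rule ccontr)
    assume "\<not> (\<exists>k<n. d k \<noteq> 0)"
    then have "mat_diag n d = 0\<^sub>m n n"
      by (auto simp: mat_diag_def intro!: eq_matI)
    then show False
      using K U unitary_diagonalization_eq[OF K(1) U KU] by simp
  qed
  then obtain k where k: "k < n" "d k \<noteq> 0"
    by blast
  show ?thesis
  proof (rule vnorm_orth_proj_mat_kernel_ge_diagonal[OF K(1) U KU x])
    show "spectral_gap K > 0"
      using spectral_gap_pos[OF K(1) diagonal_entry_in_spectrum[OF K(1) U KU k(1)] k(2)] .
    show "spectral_gap K \<le> cmod (d j)" if "j < n" "d j \<noteq> 0" for j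
      using spectral_gap_le[OF K(1) diagonal_entry_in_spectrum[OF K(1) U KU that(1)] that(2)] .
  qed
qed

section \<open>The matrix exponential\<close>

lemma pow_mat_Suc_left:
  assumes "A \<in> carrier_mat n n"
  shows "A ^\<^sub>m Suc k = A * A ^\<^sub>m k"
proof (induction k)
  case (Suc k)
  have "A ^\<^sub>m Suc (Suc k) = A * A ^\<^sub>m k * A"
    using Suc by simp
  also have "\<dots> = A * A ^\<^sub>m Suc k"
    using assms by (simp add: assoc_mult_mat[of _ n n _ n _ n])
  finally show ?case .
qed (use assms in simp)

lemma smult_pow_mat:
  fixes A :: "complex mat"
  assumes "A \<in> carrier_mat n n"
  shows "(c \<cdot>\<^sub>m A) ^\<^sub>m k = c ^ k \<cdot>\<^sub>m A ^\<^sub>m k"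
proof (induction k)
  case (Suc k)
  then show ?case
    using assms
    by (simp add: mult_smult_assoc_mat[of _ n n _ n] mult_smult_distrib[of _ n n _ n] mult.commute)
      (auto intro!: eq_matI)
qed (use assms in \<open>auto intro!: eq_matI\<close>)

lemma norm_pow_mat_index_le:
  fixes H :: "complex mat"
  assumes H: "H \<in> carrier_mat n n" and ij: "i < n" "j < n"
  shows "cmod ((H ^\<^sub>m k) $$ (i, j)) \<le> (\<Sum>a<n. \<Sum>b<n. cmod (H $$ (a, b))) ^ k"
  using ij
proof (induction k arbitrary: j)
  case 0
  then show ?case
    using H by simp
next
  case (Suc k)
  define M where "M = (\<Sum>a<n. \<Sum>b<n. cmod (H $$ (a, b)))"
  have "cmod ((H ^\<^sub>m Suc k) $$ (i, j)) = cmod (\<Sum>l<n. (H ^\<^sub>m k) $$ (i, l) * H $$ (l, j))"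
    using H Suc.prems by (simp add: scalar_prod_def atLeast0LessThan)
  also have "\<dots> \<le> (\<Sum>l<n. M ^ k * cmod (H $$ (l, j)))"
    using Suc.IH Suc.prems(1)
    by (intro order_trans[OF norm_sum] sum_mono) (simp add: norm_mult mult_right_mono M_def)
  also have "\<dots> = M ^ k * (\<Sum>l<n. cmod (H $$ (l, j)))"
    by (rule sum_distrib_left[symmetric])
  also have "\<dots> \<le> M ^ k * M"
  proof (rule mult_left_mono)
    show "(\<Sum>l<n. cmod (H $$ (l, j))) \<le> M"
      unfolding M_def using Suc.prems(2) by (intro sum_mono member_le_sum) auto
  qed (simp add: M_def sum_nonneg)
  finally show ?case
    by (simp add: M_def mult.commute)
qed

lemma mexp_carrier_mat: "A \<in> carrier_mat n n \<Longrightarrow> mexp A \<in> carrier_mat n n"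
  unfolding mexp_def by simp

context
  fixes H :: "complex mat" and n :: nat
  assumes H: "H \<in> carrier_mat n n"
begin

lemma summable_pow_mat_index:
  assumes "i < n" "j < n"
  shows "summable (\<lambda>k. (H ^\<^sub>m k) $$ (i, j) / fact k * z ^ k)"
proof (rule summable_comparison_test)
  define M where "M = (\<Sum>a<n. \<Sum>b<n. cmod (H $$ (a, b)))"
  show "\<exists>N. \<forall>k\<ge>N. norm ((H ^\<^sub>m k) $$ (i, j) / fact k * z ^ k) \<le> inverse (fact k) * (M * cmod z) ^ k"
    using norm_pow_mat_index_le[OF H assms]
    by (intro exI[of _ 0] allI impI)
      (simp add: M_def norm_mult norm_divide norm_power power_mult_distrib field_simps mult_left_mono)
  show "summable (\<lambda>k. inverse (fact k) * (M * cmod z) ^ k)"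
    by (rule summable_exp)
qed

lemma index_mexp_smult:
  assumes "i < n" "j < n"
  shows "mexp (z \<cdot>\<^sub>m H) $$ (i, j) = (\<Sum>k. (H ^\<^sub>m k) $$ (i, j) / fact k * z ^ k)"
  using H assms by (simp add: mexp_def smult_pow_mat[OF H] field_simps)

lemma has_field_derivative_mexp_index:
  assumes ij: "i < n" "j < n"
  shows "((\<lambda>z. mexp (z \<cdot>\<^sub>m H) $$ (i, j)) has_field_derivative (H * mexp (z \<cdot>\<^sub>m H)) $$ (i, j)) (at z)"
proof -
  define a where "a l k = (H ^\<^sub>m k) $$ (l, j) / fact k" for l k
  have "diffs (a i) k * z ^ k = (\<Sum>l<n. H $$ (i, l) * (a l k * z ^ k))" for k
  proof -
    have "(H ^\<^sub>m Suc k) $$ (i, j) = (\<Sum>l<n. H $$ (i, l) * (H ^\<^sub>m k) $$ (l, j))"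
      unfolding pow_mat_Suc_left[OF H] using H ij by (simp add: scalar_prod_def atLeast0LessThan)
    then show ?thesis
      by (simp add: diffs_def a_def sum_distrib_left sum_divide_distrib field_simps del: of_nat_Suc)
  qed
  then have "(\<Sum>k. diffs (a i) k * z ^ k) = (\<Sum>k. \<Sum>l<n. H $$ (i, l) * (a l k * z ^ k))"
    by presburger
  also have "\<dots> = (\<Sum>l<n. H $$ (i, l) * (\<Sum>k. a l k * z ^ k))"
  proof -
    have summable: "summable (\<lambda>k. a l k * z ^ k)" if "l < n" for l
      using summable_pow_mat_index[OF that ij(2)] by (simp add: a_def)
    then have "(\<Sum>k. \<Sum>l<n. H $$ (i, l) * (a l k * z ^ k)) = (\<Sum>l<n. \<Sum>k. H $$ (i, l) * (a l k * z ^ k))"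
      by (intro suminf_sum summable_mult) simp
    also have "\<dots> = (\<Sum>l<n. H $$ (i, l) * (\<Sum>k. a l k * z ^ k))"
      using summable by (intro sum.cong refl suminf_mult) simp
    finally show ?thesis .
  qed
  also have "\<dots> = (H * mexp (z \<cdot>\<^sub>m H)) $$ (i, j)"
    using H ij mexp_carrier_mat[of "z \<cdot>\<^sub>m H" n]
    by (simp add: a_def index_mexp_smult scalar_prod_def atLeast0LessThan)
  finally have "(\<Sum>k. diffs (a i) k * z ^ k) = (H * mexp (z \<cdot>\<^sub>m H)) $$ (i, j)" .
  moreover have "(\<lambda>z. mexp (z \<cdot>\<^sub>m H) $$ (i, j)) = (\<lambda>z. \<Sum>k. a i k * z ^ k)"
    using ij by (simp add: a_def index_mexp_smult)
  ultimately show ?thesis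
    using termdiffs_strong_converges_everywhere[of "a i" z] summable_pow_mat_index[OF ij]
    by (simp add: a_def)
qed

lemma mexp_zero: "mexp (0 \<cdot>\<^sub>m H) = 1\<^sub>m n"
proof (rule eq_matI)
  fix i j assume ij: "i < dim_row (1\<^sub>m n :: complex mat)" "j < dim_col (1\<^sub>m n :: complex mat)"
  then have "mexp (0 \<cdot>\<^sub>m H) $$ (i, j) = (\<Sum>k. (H ^\<^sub>m k) $$ (i, j) / fact k * 0 ^ k)"
    by (intro index_mexp_smult) auto
  also have "\<dots> = (H ^\<^sub>m 0) $$ (i, j) / fact 0"
    by (rule powser_zero)
  finally show "mexp (0 \<cdot>\<^sub>m H) $$ (i, j) = 1\<^sub>m n $$ (i, j)"
    using H ij by simp
qed (use mexp_carrier_mat[OF smult_carrier_mat[OF H]] in auto)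

end

text \<open>Vectors of \<open>Jordan_Normal_Form\<close> carry no topology, so curves in \<open>\<complex>\<^sup>n\<close> are differentiated componentwise.\<close>

definition has_vec_derivative :: "(real \<Rightarrow> complex vec) \<Rightarrow> complex vec \<Rightarrow> real \<Rightarrow> bool" where
  "has_vec_derivative Y Y' t \<longleftrightarrow> (\<forall>s. dim_vec (Y s) = dim_vec Y') \<and>
     (\<forall>i < dim_vec Y'. ((\<lambda>s. Y s $ i) has_vector_derivative Y' $ i) (at t))"

lemma has_vec_derivative_mult_mat_vec:
  assumes A: "A \<in> carrier_mat m n" and Y: "has_vec_derivative Y Y' t" "dim_vec Y' = n"
  shows "has_vec_derivative (\<lambda>s. A *\<^sub>v Y s) (A *\<^sub>v Y') t"
  using A Y unfolding has_vec_derivative_def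
  by (auto simp: scalar_prod_def intro!: has_vector_derivative_sum has_vector_derivative_mult_right)

lemma has_real_derivative_power2_vnorm:
  assumes "has_vec_derivative Y Y' t"
  shows "((\<lambda>s. (vnorm (Y s))\<^sup>2) has_real_derivative 2 * Re (Y' \<bullet>c Y t)) (at t)"
proof -
  define n where "n = dim_vec Y'"
  have Y: "dim_vec (Y s) = n" for s
    using assms by (simp add: has_vec_derivative_def n_def)
  have "((\<lambda>s. (cmod (Y s $ i))\<^sup>2) has_real_derivative
      2 * (Re (Y' $ i) * Re (Y t $ i) + Im (Y' $ i) * Im (Y t $ i))) (at t)" if "i < n" for i
  proof -
    have "((\<lambda>s. Y s $ i) has_vector_derivative Y' $ i) (at t)"
      using assms that by (simp add: has_vec_derivative_def n_def)
    note Re = has_field_derivative_Re[OF this] and Im = has_field_derivative_Im[OF this]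
    show ?thesis
      unfolding cmod_power2 by (rule derivative_eq_intros Re Im refl | simp add: algebra_simps)+
  qed
  then have "((\<lambda>s. \<Sum>i<n. (cmod (Y s $ i))\<^sup>2) has_real_derivative
      (\<Sum>i<n. 2 * (Re (Y' $ i) * Re (Y t $ i) + Im (Y' $ i) * Im (Y t $ i)))) (at t)"
    by (intro DERIV_sum) auto
  moreover have "(\<Sum>i<n. 2 * (Re (Y' $ i) * Re (Y t $ i) + Im (Y' $ i) * Im (Y t $ i))) = 2 * Re (Y' \<bullet>c Y t)"
    using Y by (simp add: scalar_prod_def atLeast0LessThan Re_sum sum_distrib_left n_def)
  ultimately show ?thesis
    using Y by (simp add: power2_vnorm)
qed

lemma has_vec_derivative_mexp:
  assumes H: "H \<in> carrier_mat n n" and v: "v \<in> carrier_vec n"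
  shows "has_vec_derivative (\<lambda>s. mexp ((- \<i> * complex_of_real s) \<cdot>\<^sub>m H) *\<^sub>v v)
    (- \<i> \<cdot>\<^sub>v (H *\<^sub>v (mexp ((- \<i> * complex_of_real t) \<cdot>\<^sub>m H) *\<^sub>v v))) t"
proof -
  define E where "E s = mexp ((- \<i> * complex_of_real s) \<cdot>\<^sub>m H)" for s
  define D where "D = - \<i> \<cdot>\<^sub>m (H * E t)"
  have E: "E s \<in> carrier_mat n n" for s
    unfolding E_def using H by (simp add: mexp_carrier_mat)
  have D: "D \<in> carrier_mat n n" and Dv: "D *\<^sub>v v = - \<i> \<cdot>\<^sub>v (H *\<^sub>v (E t *\<^sub>v v))"
    unfolding D_def using H E[of t] v smult_mat_mult_mat_vec[of "H * E t" n n v "- \<i>"]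
    by (simp_all add: assoc_mult_mat_vec)
  have entry: "((\<lambda>s. E s $$ (i, j)) has_vector_derivative D $$ (i, j)) (at t)"
    if "i < n" "j < n" for i j
  proof -
    have "((\<lambda>z. mexp ((- \<i> * z) \<cdot>\<^sub>m H) $$ (i, j)) has_field_derivative
        (H * mexp ((- \<i> * complex_of_real t) \<cdot>\<^sub>m H)) $$ (i, j) * (- \<i>)) (at (complex_of_real t))"
      by (rule DERIV_chain2[OF has_field_derivative_mexp_index[OF H that]]) (auto intro!: derivative_eq_intros)
    from has_vector_derivative_real_field[OF this] show ?thesis
      using H E[of t] that by (simp add: D_def E_def mult.commute del: index_mult_mat(1))
  qed
  have "((\<lambda>s. (E s *\<^sub>v v) $ i) has_vector_derivative (D *\<^sub>v v) $ i) (at t)" if "i < n" for i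
    using E D v that entry
    by (simp add: index_mult_mat_vec_sum[of _ n n] del: index_mult_mat_vec)
      (intro has_vector_derivative_sum has_vector_derivative_mult_left; simp)
  then show ?thesis
    using H v carrier_matD(1)[OF E] unfolding has_vec_derivative_def E_def[symmetric] Dv by simp
qed

section \<open>Time evolution\<close>

lemma abs_diff_le_of_deriv_bound:
  fixes h h' :: "real \<Rightarrow> real"
  assumes "\<And>s. (h has_real_derivative h' s) (at s)" "\<And>s. \<bar>h' s\<bar> \<le> B"
  shows "\<bar>h b - h a\<bar> \<le> B * \<bar>b - a\<bar>"
proof -
  have *: "\<bar>h y - h x\<bar> \<le> B * (y - x)" if xy: "x < y" for x y
  proof -
    obtain z where "h y - h x = (y - x) * h' z"
      using MVT2[of x y h h'] xy assms(1) by blast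
    then show ?thesis
      using assms(2)[of z] xy by (simp add: abs_mult mult.commute mult_left_mono)
  qed
  show ?thesis
    using *[of a b] *[of b a] by (cases a b rule: linorder_cases) (simp_all add: abs_minus_commute)
qed

text \<open>
  \<open>\<surd>G\<close> need not be differentiable where \<open>G\<close> vanishes, so the Lipschitz bound is applied to
  \<open>\<surd>(G + r\<^sup>2)\<close> and \<open>r\<close> is then sent to \<open>0\<close>.
\<close>

lemma le_square_of_deriv_le_sqrt:
  fixes G G' :: "real \<Rightarrow> real"
  assumes deriv: "\<And>s. (G has_real_derivative G' s) (at s)"
    and bound: "\<And>s. \<bar>G' s\<bar> \<le> 2 * e * sqrt (G s)"
    and nonneg: "\<And>s. G s \<ge> 0" and "G 0 = 0" and "e \<ge> 0"
  shows "G t \<le> (e * t)\<^sup>2"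
proof -
  have approx: "G t \<le> (e * t)\<^sup>2 + 2 * e * \<bar>t\<bar> * r" if "r > 0" for r
  proof -
    define h where "h s = sqrt (G s + r\<^sup>2)" for s
    define h' where "h' s = G' s / (2 * sqrt (G s + r\<^sup>2))" for s
    have pos: "G s + r\<^sup>2 > 0" for s
      using nonneg[of s] that by (simp add: add_nonneg_pos)
    have "(h has_real_derivative h' s) (at s)" for s
      unfolding h_def h'_def using pos[of s]
      by (auto intro!: derivative_eq_intros deriv simp: field_simps)
    moreover have "\<bar>h' s\<bar> \<le> e" for s
    proof -
      have "2 * e * sqrt (G s) \<le> 2 * e * sqrt (G s + r\<^sup>2)"
        using \<open>e \<ge> 0\<close> by (intro mult_left_mono) auto
      then have "\<bar>G' s\<bar> \<le> 2 * e * sqrt (G s + r\<^sup>2)"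
        using bound[of s] by linarith
      then show ?thesis
        using pos[of s] by (simp add: h'_def abs_divide divide_le_eq)
    qed
    ultimately have "\<bar>h t - h 0\<bar> \<le> e * \<bar>t - 0\<bar>"
      by (rule abs_diff_le_of_deriv_bound)
    then have "h t \<le> r + e * \<bar>t\<bar>"
      using \<open>G 0 = 0\<close> that by (simp add: h_def)
    then have "(h t)\<^sup>2 \<le> (r + e * \<bar>t\<bar>)\<^sup>2"
      using pos[of t] by (intro power_mono) (simp_all add: h_def)
    then have "G t + r\<^sup>2 \<le> (r + e * \<bar>t\<bar>)\<^sup>2"
      using pos[of t] by (simp add: h_def)
    then show ?thesis
      by (simp add: power2_eq_square algebra_simps)
  qed
  show ?thesis
  proof (rule field_le_epsilon)
    fix \<eta> :: real assume "\<eta> > 0"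
    define c where "c = 2 * e * \<bar>t\<bar>"
    have "c \<ge> 0"
      using \<open>e \<ge> 0\<close> by (simp add: c_def)
    then have "c * (\<eta> / (c + 1)) \<le> \<eta>"
      using \<open>\<eta> > 0\<close> by (simp add: field_simps)
    then show "G t \<le> (e * t)\<^sup>2 + \<eta>"
      using approx[of "\<eta> / (c + 1)"] \<open>\<eta> > 0\<close> \<open>c \<ge> 0\<close> by (simp add: c_def mult.assoc)
  qed
qed

lemma vnorm_mexp_self_adjoint:
  assumes H: "H \<in> carrier_mat n n" "self_adjoint H" and v: "v \<in> carrier_vec n"
  shows "vnorm (mexp ((- \<i> * complex_of_real t) \<cdot>\<^sub>m H) *\<^sub>v v) = vnorm v"
proof -
  define Y where "Y s = mexp ((- \<i> * complex_of_real s) \<cdot>\<^sub>m H) *\<^sub>v v" for s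
  have Y: "Y s \<in> carrier_vec n" for s
    unfolding Y_def by (rule mult_mat_vec_carrier[OF mexp_carrier_mat[OF smult_carrier_mat[OF H(1)]] v])
  have deriv: "((\<lambda>s. (vnorm (Y s))\<^sup>2) has_real_derivative 0) (at s)" for s
  proof -
    have "((\<lambda>s. (vnorm (Y s))\<^sup>2) has_real_derivative 2 * Re ((- \<i> \<cdot>\<^sub>v (H *\<^sub>v Y s)) \<bullet>c Y s)) (at s)"
      unfolding Y_def by (intro has_real_derivative_power2_vnorm has_vec_derivative_mexp[OF H(1) v])
    moreover have "Re ((- \<i> \<cdot>\<^sub>v (H *\<^sub>v Y s)) \<bullet>c Y s) = 0"
      using H Y[of s] cscalar_prod_self_adjoint_real[OF H(2,1) Y]
      by (simp add: smult_scalar_prod_distrib[of _ n])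
    ultimately show ?thesis
      by simp
  qed
  have "(vnorm (Y t))\<^sup>2 = (vnorm (Y 0))\<^sup>2"
    using DERIV_isconst_all[of "\<lambda>s. (vnorm (Y s))\<^sup>2"] deriv by blast
  moreover have "Y 0 = v"
    using H(1) v by (simp add: Y_def mexp_zero)
  ultimately show ?thesis
    unfolding Y_def by (simp add: power2_eq_iff_nonneg vnorm_nonneg)
qed

lemma commutator_estimate:
  assumes H: "H \<in> carrier_mat n n" "self_adjoint H" and K: "K \<in> carrier_mat n n"
    and y: "y \<in> carrier_vec n"
  shows "\<bar>Re ((K *\<^sub>v (- \<i> \<cdot>\<^sub>v (H *\<^sub>v y))) \<bullet>c (K *\<^sub>v y))\<bar>
    \<le> vnorm ((H * K - K * H) *\<^sub>v y) * vnorm (K *\<^sub>v y)"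
proof -
  define C where "C = H * K - K * H"
  have C: "C \<in> carrier_mat n n"
    unfolding C_def using mult_carrier_mat[OF K H(1)] by (rule minus_carrier_mat)
  have Ky: "K *\<^sub>v y \<in> carrier_vec n" and Cy: "C *\<^sub>v y \<in> carrier_vec n"
    using K C y by auto
  have "K * H = H * K - C"
    using H(1) K unfolding C_def by (intro eq_matI) simp_all
  then have "K *\<^sub>v (H *\<^sub>v y) = (H * K - C) *\<^sub>v y"
    using assoc_mult_mat_vec[OF K H(1) y] by simp
  also have "\<dots> = H *\<^sub>v (K *\<^sub>v y) - C *\<^sub>v y"
    using minus_mult_distrib_mat_vec[OF mult_carrier_mat[OF H(1) K] C y] assoc_mult_mat_vec[OF H(1) K y]
    by simp
  finally have "K *\<^sub>v (- \<i> \<cdot>\<^sub>v (H *\<^sub>v y)) = - \<i> \<cdot>\<^sub>v (H *\<^sub>v (K *\<^sub>v y) - C *\<^sub>v y)"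
    using mult_mat_vec[OF K mult_mat_vec_carrier[OF H(1) y]] by simp
  moreover have "(H *\<^sub>v (K *\<^sub>v y) - C *\<^sub>v y) \<bullet>c (K *\<^sub>v y)
      = (H *\<^sub>v (K *\<^sub>v y)) \<bullet>c (K *\<^sub>v y) - (C *\<^sub>v y) \<bullet>c (K *\<^sub>v y)"
    using H(1) Ky Cy by (simp add: minus_scalar_prod_distrib[of _ n])
  ultimately have "Re ((K *\<^sub>v (- \<i> \<cdot>\<^sub>v (H *\<^sub>v y))) \<bullet>c (K *\<^sub>v y)) = - Im ((C *\<^sub>v y) \<bullet>c (K *\<^sub>v y))"
    using H(1) Ky Cy cscalar_prod_self_adjoint_real[OF H(2,1) Ky]
    by (simp add: smult_scalar_prod_distrib[of _ n])
  also have "\<bar>\<dots>\<bar> \<le> vnorm (C *\<^sub>v y) * vnorm (K *\<^sub>v y)"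
    using abs_Im_le_cmod order_trans cauchy_schwarz[OF Cy Ky] by fastforce
  finally show ?thesis
    unfolding C_def .
qed

lemma vnorm_mexp_commutator_le:
  assumes H: "H \<in> carrier_mat n n" "self_adjoint H" and K: "K \<in> carrier_mat n n"
    and comm: "opnorm (H * K - K * H) \<le> \<epsilon>"
    and v: "v \<in> carrier_vec n" "K *\<^sub>v v = 0\<^sub>v n" "vnorm v = 1"
  shows "vnorm (K *\<^sub>v (mexp ((- \<i> * complex_of_real t) \<cdot>\<^sub>m H) *\<^sub>v v)) \<le> \<epsilon> * \<bar>t\<bar>"
proof -
  define Y where "Y s = mexp ((- \<i> * complex_of_real s) \<cdot>\<^sub>m H) *\<^sub>v v" for s
  define G where "G s = (vnorm (K *\<^sub>v Y s))\<^sup>2" for s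
  define G' where "G' s = 2 * Re ((K *\<^sub>v (- \<i> \<cdot>\<^sub>v (H *\<^sub>v Y s))) \<bullet>c (K *\<^sub>v Y s))" for s
  have Y: "Y s \<in> carrier_vec n" for s
    unfolding Y_def by (rule mult_mat_vec_carrier[OF mexp_carrier_mat[OF smult_carrier_mat[OF H(1)]] v(1)])
  have comm_le: "vnorm ((H * K - K * H) *\<^sub>v Y s) \<le> \<epsilon>" for s
  proof -
    have "vnorm (Y s) \<le> 1"
      using vnorm_mexp_self_adjoint[OF H v(1)] v(3) by (simp add: Y_def)
    then show ?thesis
      using vnorm_le_opnorm[OF _ Y] comm H(1) K by (meson minus_carrier_mat mult_carrier_mat order_trans)
  qed
  have "(G has_real_derivative G' s) (at s)" for s
    unfolding G_def G'_def Y_def using H(1) v(1)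
    by (intro has_real_derivative_power2_vnorm has_vec_derivative_mult_mat_vec[OF K]
        has_vec_derivative_mexp) auto
  moreover have "\<bar>G' s\<bar> \<le> 2 * \<epsilon> * sqrt (G s)" for s
    using commutator_estimate[OF H K Y, of s] comm_le[of s] vnorm_nonneg[of "K *\<^sub>v Y s"]
    by (simp add: G_def G'_def abs_mult) (meson mult_right_mono order_trans)
  moreover have "G s \<ge> 0" for s
    by (simp add: G_def)
  moreover have "G 0 = 0"
    using H(1) v by (simp add: G_def Y_def mexp_zero vnorm_def)
  moreover have "\<epsilon> \<ge> 0"
    using comm_le[of 0] vnorm_nonneg order_trans by blast
  ultimately have "G t \<le> (\<epsilon> * t)\<^sup>2"
    by (rule le_square_of_deriv_le_sqrt)
  then have "(vnorm (K *\<^sub>v Y t))\<^sup>2 \<le> (\<epsilon> * \<bar>t\<bar>)\<^sup>2"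
    by (simp add: G_def power_mult_distrib)
  then have "vnorm (K *\<^sub>v Y t) \<le> \<epsilon> * \<bar>t\<bar>"
    by (rule power2_le_imp_le) (simp add: \<open>\<epsilon> \<ge> 0\<close>)
  then show ?thesis
    by (simp add: Y_def)
qed

section \<open>Tensor products\<close>

lemma kron_carrier_mat:
  "A \<in> carrier_mat p q \<Longrightarrow> B \<in> carrier_mat r s \<Longrightarrow> kron A B \<in> carrier_mat (p * r) (q * s)"
  unfolding kron_def by auto

lemma mat_adjoint_kron: "mat_adjoint (kron A B) = kron (mat_adjoint A) (mat_adjoint B)"
proof (rule eq_matI)
  fix i j assume "i < dim_row (kron (mat_adjoint A) (mat_adjoint B))" "j < dim_col (kron (mat_adjoint A) (mat_adjoint B))"
  then have ij: "i < dim_col A * dim_col B" "j < dim_row A * dim_row B"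
    by (simp_all add: kron_def)
  moreover have "dim_col B > 0" "dim_row B > 0"
    using calculation by (auto intro: gr0I)
  ultimately have "i div dim_col B < dim_col A" "i mod dim_col B < dim_col B"
    "j div dim_row B < dim_row A" "j mod dim_row B < dim_row B"
    by (auto simp: less_mult_imp_div_less mult.commute)
  then show "mat_adjoint (kron A B) $$ (i, j) = kron (mat_adjoint A) (mat_adjoint B) $$ (i, j)"
    using ij by (simp add: kron_def)
qed (simp_all add: kron_def)

lemma self_adjoint_kron:
  assumes "self_adjoint A" "self_adjoint B"
  shows "self_adjoint (kron A B)"
proof -
  have "mat_adjoint (kron A B) = kron A B"
    using assms by (simp add: mat_adjoint_kron self_adjoint_def)
  then show ?thesis
    using assms by (simp add: self_adjoint_def kron_def)
qed

theorem corollary4: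
  fixes m n :: nat and TA TB H K :: "complex mat" and psi0 :: "complex vec"
    and \<epsilon> t :: real
  assumes "TA \<in> carrier_mat m m" and "TB \<in> carrier_mat n n"
    and "self_adjoint TA" and "self_adjoint TB"
    and K_def: "K = kron TA (1\<^sub>m n) - kron (1\<^sub>m m) TB"
    and "K \<noteq> 0\<^sub>m (m * n) (m * n)"
    and "\<epsilon> \<ge> 0"
    and "H \<in> carrier_mat (m * n) (m * n)" and "self_adjoint H"
    and "opnorm (H * K - K * H) \<le> \<epsilon>"
    and "psi0 \<in> mat_kernel K" and "vnorm psi0 = 1"
  shows "(vnorm (orth_proj (mat_kernel K) (mexp ((- \<i> * complex_of_real t) \<cdot>\<^sub>m H) *\<^sub>v psi0)))\<^sup>2
           \<ge> 1 - \<epsilon>\<^sup>2 * t\<^sup>2 / (spectral_gap K)\<^sup>2"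
proof -
  note TA = assms(1,3) and TB = assms(2,4) and H = assms(8,9) and psi0 = assms(11,12)
  have AB: "kron TA (1\<^sub>m n) \<in> carrier_mat (m * n) (m * n)" "kron (1\<^sub>m m) TB \<in> carrier_mat (m * n) (m * n)"
    using TA TB by (auto intro: kron_carrier_mat)
  then have K: "K \<in> carrier_mat (m * n) (m * n)" "self_adjoint K"
    using TA TB unfolding K_def by (auto intro!: self_adjoint_minus self_adjoint_kron self_adjoint_one)
  have v: "psi0 \<in> carrier_vec (m * n)" "K *\<^sub>v psi0 = 0\<^sub>v (m * n)"
    using psi0(1) mat_kernelD[OF K(1)] by auto
  define x where "x = mexp ((- \<i> * complex_of_real t) \<cdot>\<^sub>m H) *\<^sub>v psi0"
  have x: "x \<in> carrier_vec (m * n)" "vnorm x = 1"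
    using vnorm_mexp_self_adjoint[OF H v(1)] psi0(2)
    unfolding x_def by (auto intro: mult_mat_vec_carrier[OF mexp_carrier_mat[OF smult_carrier_mat[OF H(1)]] v(1)])
  have "vnorm (K *\<^sub>v x) \<le> \<epsilon> * \<bar>t\<bar>"
    unfolding x_def using vnorm_mexp_commutator_le[OF H K(1) assms(10) v psi0(2)] .
  then have "(vnorm (K *\<^sub>v x))\<^sup>2 \<le> (\<epsilon> * \<bar>t\<bar>)\<^sup>2"
    by (rule power_mono) (simp add: vnorm_nonneg)
  then have "(vnorm (K *\<^sub>v x) / spectral_gap K)\<^sup>2 \<le> \<epsilon>\<^sup>2 * t\<^sup>2 / (spectral_gap K)\<^sup>2"
    by (simp add: power_divide divide_right_mono power_mult_distrib)
  then show ?thesis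
    using vnorm_orth_proj_mat_kernel_ge[OF K assms(6) x(1)] x(2) unfolding x_def by simp
qed

end
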